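(* Let $\alpha\in(1,2)$, $H\in\left(\frac{2-\alpha}{2},\frac12\right)$, $t>0$, and $h(\xi):=\big(1-e^{-2t\xi^\alpha}\big)\xi^{1-2H-\alpha}$ for $\xi>0$. Then $$\int_0^\infty h(\xi)\cos(\xi r)\,d\xi=O\big(r^{\frac{H-1}{2}}\big)\quad\text{as } r\to\infty.$$
   Context: The integral is understood as an improper Riemann integral $\lim_{R\to\infty}\int_0^R$. *)

theory Defs
  imports "HOL-Analysis.Analysis" "HOL-Library.Landau_Symbols"
begin

definition hfun :: "real \<Rightarrow> real \<Rightarrow> real \<Rightarrow> real \<Rightarrow> real" where
  "hfun \<alpha> H t \<xi> = (1 - exp (- 2 * t * \<xi> powr \<alpha>)) * \<xi> powr (1 - 2 * H - \<alpha>)"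

definition improper_integral0 :: "(real \<Rightarrow> real) \<Rightarrow> real" where
  "improper_integral0 f = Lim at_top (\<lambda>R::real. integral {0..R} f)"

definition improper_integrable0 :: "(real \<Rightarrow> real) \<Rightarrow> bool" where
  "improper_integrable0 f \<longleftrightarrow> (\<forall>R\<ge>0. f integrable_on {0..R}) \<and>
      (\<exists>L. ((\<lambda>R. integral {0..R} f) \<longlongrightarrow> L) at_top)"

end

theory Submission
  imports Defs
begin

(* Write \<beta> = 1 - 2H - \<alpha> < -1. Near 0 the function h behaves like 2t \<xi>^(1-2H), at infinity like
   \<xi>^\<beta>; so h is bounded, h(\<xi>) cos(\<xi>r) is absolutely integrable, and h' is integrable on (0,\<infinity>),
   being dominated by \<xi>^(-2H) near 0 and by \<xi>^(\<beta>-1) at infinity. Integrating by parts against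
   sin(\<xi>r)/r gives |\<integral>_a^R h(\<xi>) cos(\<xi>r) d\<xi>| \<le> (2 sup|h| + \<integral>|h'|)/r for all 0 < a \<le> R, so the
   transform is O(1/r), which is stronger than O(r^((H-1)/2)) because (H-1)/2 > -1. *)

lemma abs_mult_sin_le:
  fixes y z :: real shows "\<bar>y * sin z\<bar> \<le> \<bar>y\<bar>"
  unfolding abs_mult by (rule mult_left_le) auto

lemma abs_mult_cos_le:
  fixes y z :: real shows "\<bar>y * cos z\<bar> \<le> \<bar>y\<bar>"
  unfolding abs_mult by (rule mult_left_le) auto

lemma integral_powr_le_from_0:
  fixes p :: real
  assumes "0 \<le> a" "a \<le> b" "b \<le> 1" "-1 < p"
  shows "integral {a..b} (\<lambda>x. x powr p) \<le> 1 / (p + 1)"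
proof -
  have int: "(\<lambda>x. x powr p) integrable_on {0..1}"
    using integrable_on_powr_from_0 assms by simp
  have "integral {a..b} (\<lambda>x. x powr p) \<le> integral {0..1} (\<lambda>x. x powr p)"
    using assms by (intro integral_subset_le integrable_on_subinterval[OF int] int) auto
  also have "\<dots> = 1 / (p + 1)"
    using has_integral_powr_from_0[of p 1] assms by (simp add: integral_unique)
  finally show ?thesis .
qed

lemma integral_powr_le_to_inf:
  fixes q :: real
  assumes "1 \<le> a" "a \<le> b" "q < -1"
  shows "integral {a..b} (\<lambda>x. x powr q) \<le> - 1 / (q + 1)"
proof -
  have int: "(\<lambda>x. x powr q) integrable_on {1..}"
    using has_integral_powr_to_inf[of q 1] assms by (auto intro: has_integral_integrable)
  have "integral {a..b} (\<lambda>x. x powr q) \<le> integral {1..} (\<lambda>x. x powr q)"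
    using assms by (intro integral_subset_le integrable_on_subinterval[OF int] int) auto
  also have "\<dots> = - 1 / (q + 1)"
    using has_integral_powr_to_inf[of q 1] assms by (simp add: integral_unique)
  finally show ?thesis .
qed

lemma integral_abs_le_by_powr_majorants:
  fixes f :: "real \<Rightarrow> real"
  assumes cont: "continuous_on {0<..} f"
    and near_0: "\<And>x. 0 < x \<Longrightarrow> x \<le> 1 \<Longrightarrow> \<bar>f x\<bar> \<le> C * x powr p"
    and near_inf: "\<And>x. 1 \<le> x \<Longrightarrow> \<bar>f x\<bar> \<le> D * x powr q"
    and "-1 < p" "q < -1" and "0 \<le> C" "0 \<le> D" and "0 < a" "a \<le> b"
  shows "integral {a..b} (\<lambda>x. \<bar>f x\<bar>) \<le> C / (p + 1) - D / (q + 1)"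
proof -
  have int: "(\<lambda>x. \<bar>f x\<bar>) integrable_on {a'..b'}" if "0 < a'" for a' b'
    using that by (intro integrable_continuous_interval continuous_on_rabs
        continuous_on_subset[OF cont]) auto
  have piece_0: "integral {a'..b'} (\<lambda>x. \<bar>f x\<bar>) \<le> C / (p + 1)"
    if "0 < a'" "a' \<le> b'" "b' \<le> 1" for a' b'
  proof -
    have "integral {a'..b'} (\<lambda>x. \<bar>f x\<bar>) \<le> integral {a'..b'} (\<lambda>x. C * x powr p)"
      using that near_0 by (intro integral_le int integrable_continuous_interval continuous_intros) auto
    also have "\<dots> \<le> C * (1 / (p + 1))"
      using mult_left_mono[OF integral_powr_le_from_0[of a' b' p] \<open>0 \<le> C\<close>] that assms by simp
    finally show ?thesis by simp
  qed
  have piece_inf: "integral {a'..b'} (\<lambda>x. \<bar>f x\<bar>) \<le> - D / (q + 1)"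
    if "1 \<le> a'" "a' \<le> b'" for a' b'
  proof -
    have "integral {a'..b'} (\<lambda>x. \<bar>f x\<bar>) \<le> integral {a'..b'} (\<lambda>x. D * x powr q)"
      using that near_inf by (intro integral_le int integrable_continuous_interval continuous_intros) auto
    also have "\<dots> \<le> D * (- 1 / (q + 1))"
      using mult_left_mono[OF integral_powr_le_to_inf[of a' b' q] \<open>0 \<le> D\<close>] that assms by simp
    finally show ?thesis by simp
  qed
  have "0 \<le> C / (p + 1)" "0 \<le> - D / (q + 1)"
    using assms by (auto intro: divide_nonneg_pos divide_nonneg_neg)
  consider "b \<le> 1" | "1 \<le> a" | "a < 1" "1 < b" by linarith
  then show ?thesis
  proof cases
    case 1
    then show ?thesis using piece_0[OF \<open>0 < a\<close> \<open>a \<le> b\<close>] \<open>0 \<le> - D / (q + 1)\<close> by linarith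
  next
    case 2
    then show ?thesis using piece_inf[OF _ \<open>a \<le> b\<close>] \<open>0 \<le> C / (p + 1)\<close> by linarith
  next
    case 3
    have "integral {a..b} (\<lambda>x. \<bar>f x\<bar>) = integral {a..1} (\<lambda>x. \<bar>f x\<bar>) + integral {1..b} (\<lambda>x. \<bar>f x\<bar>)"
      using Henstock_Kurzweil_Integration.integral_combine[OF _ _ int[OF \<open>0 < a\<close>]] 3 by simp
    then show ?thesis using piece_0[of a 1] piece_inf[of 1 b] 3 \<open>0 < a\<close> by simp
  qed
qed

lemma abs_integral_cos_by_parts_le:
  fixes h h' :: "real \<Rightarrow> real"
  assumes "a \<le> b" "0 < r"
    and deriv: "\<And>x. x \<in> {a..b} \<Longrightarrow> (h has_real_derivative h' x) (at x)"
    and cont': "continuous_on {a..b} h'"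
    and "\<bar>h a\<bar> \<le> M" "\<bar>h b\<bar> \<le> M"
    and var: "integral {a..b} (\<lambda>x. \<bar>h' x\<bar>) \<le> V"
  shows "\<bar>integral {a..b} (\<lambda>x. h x * cos (x * r))\<bar> \<le> (2 * M + V) / r"
proof -
  have cont: "continuous_on {a..b} h"
    using deriv DERIV_isCont continuous_at_imp_continuous_on by blast
  have int_sin: "(\<lambda>x. h' x * sin (x * r) / r) integrable_on {a..b}"
    using \<open>0 < r\<close> by (intro integrable_continuous_interval continuous_intros cont') auto
  have int_cos: "(\<lambda>x. h x * cos (x * r)) integrable_on {a..b}"
    by (intro integrable_continuous_interval continuous_intros cont)
  have "((\<lambda>x. h' x * sin (x * r) / r + h x * cos (x * r)) has_integral
          h b * sin (b * r) / r - h a * sin (a * r) / r) {a..b}"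
  proof (rule fundamental_theorem_of_calculus[OF \<open>a \<le> b\<close>])
    fix x assume "x \<in> {a..b}"
    then have "((\<lambda>x. h x * sin (x * r) / r) has_real_derivative
        h' x * sin (x * r) / r + h x * cos (x * r)) (at x)"
      using deriv \<open>0 < r\<close> by (auto intro!: derivative_eq_intros simp: field_simps)
    then show "((\<lambda>x. h x * sin (x * r) / r) has_vector_derivative
        h' x * sin (x * r) / r + h x * cos (x * r)) (at x within {a..b})"
      by (simp add: has_real_derivative_iff_has_vector_derivative[symmetric] has_field_derivative_at_within)
  qed
  then have "integral {a..b} (\<lambda>x. h' x * sin (x * r) / r + h x * cos (x * r)) =
      h b * sin (b * r) / r - h a * sin (a * r) / r"
    by (rule integral_unique)
  then have parts: "integral {a..b} (\<lambda>x. h x * cos (x * r)) =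
      h b * sin (b * r) / r - h a * sin (a * r) / r - integral {a..b} (\<lambda>x. h' x * sin (x * r) / r)"
    using integral_add[OF int_sin int_cos] by linarith
  have boundary: "\<bar>h x * sin (x * r) / r\<bar> \<le> M / r" if "\<bar>h x\<bar> \<le> M" for x
    using order.trans[OF abs_mult_sin_le that] \<open>0 < r\<close> by (simp add: divide_right_mono)
  have "\<bar>integral {a..b} (\<lambda>x. h' x * sin (x * r) / r)\<bar> \<le> integral {a..b} (\<lambda>x. \<bar>h' x\<bar> / r)"
  proof (rule integral_norm_bound_integral[OF int_sin, unfolded real_norm_def])
    show "(\<lambda>x. \<bar>h' x\<bar> / r) integrable_on {a..b}"
      using \<open>0 < r\<close> by (intro integrable_continuous_interval continuous_intros cont') auto
    show "\<bar>h' x * sin (x * r) / r\<bar> \<le> \<bar>h' x\<bar> / r" for x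
      using abs_mult_sin_le[of "h' x"] \<open>0 < r\<close> by (simp add: divide_right_mono)
  qed
  also have "\<dots> \<le> V / r"
    using var \<open>0 < r\<close> by (simp add: divide_right_mono)
  finally have "\<bar>integral {a..b} (\<lambda>x. h' x * sin (x * r) / r)\<bar> \<le> V / r" .
  then have "\<bar>integral {a..b} (\<lambda>x. h x * cos (x * r))\<bar> \<le> M / r + M / r + V / r"
    unfolding parts using boundary[OF \<open>\<bar>h a\<bar> \<le> M\<close>] boundary[OF \<open>\<bar>h b\<bar> \<le> M\<close>] by arith
  then show ?thesis
    by (simp add: add_divide_distrib)
qed

lemma abs_integral_le_by_left_limit:
  fixes f :: "real \<Rightarrow> real"
  assumes int: "f integrable_on {a..b}" and "a < b"
    and tails: "\<And>c. a < c \<Longrightarrow> c \<le> b \<Longrightarrow> \<bar>integral {c..b} f\<bar> \<le> K"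
  shows "\<bar>integral {a..b} f\<bar> \<le> K"
proof -
  have "continuous_on {a..b} (\<lambda>c. integral {c..b} f)"
    by (rule indefinite_integral_continuous_1'[OF int])
  then have "((\<lambda>c. integral {c..b} f) \<longlongrightarrow> integral {a..b} f) (at a within {a..b})"
    using \<open>a < b\<close> by (simp add: continuous_on_def)
  then have "((\<lambda>c. integral {c..b} f) \<longlongrightarrow> integral {a..b} f) (at_right a)"
    by (simp add: at_within_Icc_at_right[OF \<open>a < b\<close>])
  moreover have "\<forall>\<^sub>F c in at_right a. \<bar>integral {c..b} f\<bar> \<le> K"
    using eventually_at_right_less[of a] order_tendstoD(2)[OF tendsto_ident_at \<open>a < b\<close>]
    by eventually_elim (use tails in auto)
  ultimately show ?thesis
    by (intro tendsto_le[OF trivial_limit_at_right_real tendsto_const tendsto_rabs])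
qed

lemma abs_integral_cos_le:
  fixes h h' :: "real \<Rightarrow> real"
  assumes cont: "continuous_on {0..} h"
    and deriv: "\<And>x. 0 < x \<Longrightarrow> (h has_real_derivative h' x) (at x)"
    and cont': "continuous_on {0<..} h'"
    and bound: "\<And>x. 0 \<le> x \<Longrightarrow> \<bar>h x\<bar> \<le> M"
    and var: "\<And>a b. 0 < a \<Longrightarrow> a \<le> b \<Longrightarrow> integral {a..b} (\<lambda>x. \<bar>h' x\<bar>) \<le> V"
    and "0 < r" "0 < R"
  shows "\<bar>integral {0..R} (\<lambda>x. h x * cos (x * r))\<bar> \<le> (2 * M + V) / r"
proof (rule abs_integral_le_by_left_limit[OF _ \<open>0 < R\<close>])
  show "(\<lambda>x. h x * cos (x * r)) integrable_on {0..R}"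
    by (intro integrable_continuous_interval continuous_intros continuous_on_subset[OF cont]) auto
  fix a assume "0 < a" "a \<le> R"
  show "\<bar>integral {a..R} (\<lambda>x. h x * cos (x * r))\<bar> \<le> (2 * M + V) / r"
  proof (rule abs_integral_cos_by_parts_le[OF \<open>a \<le> R\<close> \<open>0 < r\<close>])
    show "(h has_real_derivative h' x) (at x)" if "x \<in> {a..R}" for x
      using that \<open>0 < a\<close> by (intro deriv) auto
    show "continuous_on {a..R} h'"
      using \<open>0 < a\<close> by (intro continuous_on_subset[OF cont']) auto
    show "\<bar>h a\<bar> \<le> M" "\<bar>h R\<bar> \<le> M"
      using \<open>0 < a\<close> \<open>a \<le> R\<close> by (intro bound; simp)+
    show "integral {a..R} (\<lambda>x. \<bar>h' x\<bar>) \<le> V"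
      using \<open>0 < a\<close> \<open>a \<le> R\<close> by (rule var)
  qed
qed

lemma absolutely_integrable_atLeast0_powr_majorant:
  fixes f :: "real \<Rightarrow> real"
  assumes cont: "continuous_on {0..} f"
    and decay: "\<And>x. 1 \<le> x \<Longrightarrow> \<bar>f x\<bar> \<le> C * x powr q" and "q < -1"
  shows "f absolutely_integrable_on {0..}"
proof -
  have "f absolutely_integrable_on {0..1}"
    by (rule absolutely_integrable_continuous_real) (auto intro: continuous_on_subset[OF cont])
  moreover have "f absolutely_integrable_on {1..}"
  proof (rule measurable_bounded_by_integrable_imp_absolutely_integrable)
    show "f \<in> borel_measurable (lebesgue_on {1..})"
      by (rule continuous_imp_measurable_on_sets_lebesgue) (auto intro: continuous_on_subset[OF cont])
    have "(\<lambda>x. x powr q) integrable_on {1..}"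
      using has_integral_powr_to_inf[of q 1] \<open>q < -1\<close> by (auto intro: has_integral_integrable)
    then show "(\<lambda>x. C * x powr q) integrable_on {1..}"
      by (rule integrable_on_mult_right)
    show "norm (f x) \<le> C * x powr q" if "x \<in> {1..}" for x
      using decay that by simp
  qed simp
  ultimately have "f absolutely_integrable_on ({0..1} \<union> {1..})"
    by (rule absolutely_integrable_Un)
  moreover have "{0..1} \<union> {1..} = {0::real..}" by auto
  ultimately show ?thesis by simp
qed

lemma improper_integral0_absolutely_integrable:
  assumes "f absolutely_integrable_on {0..}"
  shows "improper_integrable0 f"
    and "((\<lambda>R. integral {0..R} f) \<longlongrightarrow> improper_integral0 f) at_top"
proof -
  have "set_integrable lebesgue {0..R} f" for R
    by (rule set_integrable_subset[OF assms]) auto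
  note int = set_lebesgue_integral_eq_integral(1)[OF this]
    and eq = set_lebesgue_integral_eq_integral(2)[OF this]
  have "((\<lambda>R. set_lebesgue_integral lebesgue {0..R} f) \<longlongrightarrow> set_lebesgue_integral lebesgue {0..} f) at_top"
    by (rule tendsto_set_lebesgue_integral_at_top[OF _ assms]) auto
  then have lim: "((\<lambda>R. integral {0..R} f) \<longlongrightarrow> set_lebesgue_integral lebesgue {0..} f) at_top"
    by (simp add: eq)
  then show "improper_integrable0 f"
    unfolding improper_integrable0_def using int by blast
  have "improper_integral0 f = set_lebesgue_integral lebesgue {0..} f"
    unfolding improper_integral0_def by (rule tendsto_Lim[OF trivial_limit_at_top_linorder lim])
  with lim show "((\<lambda>R. integral {0..R} f) \<longlongrightarrow> improper_integral0 f) at_top"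
    by simp
qed

lemma abs_improper_integral0_le:
  assumes "f absolutely_integrable_on {0..}" and "\<And>R. 0 < R \<Longrightarrow> \<bar>integral {0..R} f\<bar> \<le> K"
  shows "\<bar>improper_integral0 f\<bar> \<le> K"
  using improper_integral0_absolutely_integrable(2)[OF assms(1)]
proof (rule tendsto_le[OF trivial_limit_at_top_linorder tendsto_const tendsto_rabs])
  show "\<forall>\<^sub>F R in at_top. \<bar>integral {0..R} f\<bar> \<le> K"
    using eventually_gt_at_top[of 0] by eventually_elim (rule assms(2))
qed

lemma one_minus_exp_minus_le:
  fixes u :: real shows "1 - exp (- u) \<le> min u 1"
  using exp_ge_add_one_self[of "- u"] by simp

lemma mult_exp_minus_le:
  fixes u :: real assumes "0 \<le> u" shows "u * exp (- u) \<le> min u 1"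
proof -
  have "u * exp (- u) \<le> u"
    using assms by (intro mult_left_le) auto
  moreover have "u \<le> exp u"
    using exp_ge_add_one_self[of u] by linarith
  then have "u * exp (- u) \<le> 1"
    by (simp add: exp_minus field_simps)
  ultimately show ?thesis by simp
qed

definition damped_kernel :: "real \<Rightarrow> real \<Rightarrow> real \<Rightarrow> real \<Rightarrow> real" where
  "damped_kernel c \<alpha> \<beta> \<xi> = (1 - exp (- c * \<xi> powr \<alpha>)) * \<xi> powr \<beta>"

definition damped_kernel_deriv :: "real \<Rightarrow> real \<Rightarrow> real \<Rightarrow> real \<Rightarrow> real" where
  "damped_kernel_deriv c \<alpha> \<beta> \<xi> =
     (\<alpha> * (c * \<xi> powr \<alpha>) * exp (- c * \<xi> powr \<alpha>) + \<beta> * (1 - exp (- c * \<xi> powr \<alpha>))) * \<xi> powr (\<beta> - 1)"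

locale damped_kernel_exponents =
  fixes c \<alpha> \<beta> :: real
  assumes c_pos: "0 < c" and exponent_sum_pos: "0 < \<alpha> + \<beta>" and decay_exponent: "\<beta> < -1"
begin

abbreviation k :: "real \<Rightarrow> real" where "k \<equiv> damped_kernel c \<alpha> \<beta>"
abbreviation k' :: "real \<Rightarrow> real" where "k' \<equiv> damped_kernel_deriv c \<alpha> \<beta>"

lemma kernel_nonneg: "0 \<le> \<xi> \<Longrightarrow> 0 \<le> k \<xi>"
  unfolding damped_kernel_def using c_pos by (intro mult_nonneg_nonneg) auto

lemma kernel_le:
  assumes "0 < \<xi>"
  shows "k \<xi> \<le> c * \<xi> powr (\<alpha> + \<beta>)" and "k \<xi> \<le> \<xi> powr \<beta>"
proof -
  have k_le: "k \<xi> \<le> min (c * \<xi> powr \<alpha>) 1 * \<xi> powr \<beta>"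
    unfolding damped_kernel_def
    using one_minus_exp_minus_le[of "c * \<xi> powr \<alpha>"] by (intro mult_right_mono) auto
  also have "\<dots> \<le> c * \<xi> powr \<alpha> * \<xi> powr \<beta>"
    by (intro mult_right_mono) auto
  also have "\<dots> = c * \<xi> powr (\<alpha> + \<beta>)"
    by (simp add: powr_add)
  finally show "k \<xi> \<le> c * \<xi> powr (\<alpha> + \<beta>)" .
  have "min (c * \<xi> powr \<alpha>) 1 * \<xi> powr \<beta> \<le> 1 * \<xi> powr \<beta>"
    by (intro mult_right_mono) auto
  with k_le show "k \<xi> \<le> \<xi> powr \<beta>" by simp
qed

lemma abs_kernel_le:
  assumes "0 \<le> \<xi>" shows "\<bar>k \<xi>\<bar> \<le> max c 1"
proof -
  consider "\<xi> = 0" | "0 < \<xi>" "\<xi> \<le> 1" | "1 < \<xi>"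
    using assms by linarith
  then have "k \<xi> \<le> max c 1"
  proof cases
    case 1
    then show ?thesis by (simp add: damped_kernel_def)
  next
    case 2
    have "k \<xi> \<le> c * \<xi> powr (\<alpha> + \<beta>)"
      using kernel_le(1)[OF \<open>0 < \<xi>\<close>] .
    also have "\<dots> \<le> c * 1"
      using 2 c_pos exponent_sum_pos powr_mono2[of "\<alpha> + \<beta>" \<xi> 1] by (intro mult_left_mono) auto
    finally show ?thesis by simp
  next
    case 3
    have "k \<xi> \<le> \<xi> powr \<beta>"
      using 3 kernel_le(2) by simp
    also have "\<dots> \<le> 1"
      using 3 decay_exponent powr_mono[of \<beta> 0 \<xi>] by simp
    finally show ?thesis by simp
  qed
  with kernel_nonneg[OF assms] show ?thesis by simp
qed

lemma kernel_continuous_on: "continuous_on {0..} k"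
proof -
  have "isCont k \<xi>" if "0 < \<xi>" for \<xi>
    using that unfolding damped_kernel_def by (intro continuous_intros) auto
  then have "continuous (at \<xi> within {0..}) k" if "0 < \<xi>" for \<xi>
    using that continuous_at_imp_continuous_within by blast
  moreover have "(k \<longlongrightarrow> 0) (at 0 within {0..})"
  proof (rule tendsto_sandwich[OF _ _ tendsto_const])
    show "((\<lambda>\<xi>. c * \<xi> powr (\<alpha> + \<beta>)) \<longlongrightarrow> 0) (at 0 within {0..})"
      using exponent_sum_pos tendsto_mult_right_zero[OF tendsto_zero_powrI[OF tendsto_ident_at tendsto_const]]
      by (auto simp: eventually_at_filter)
  qed (auto simp: eventually_at_filter kernel_nonneg kernel_le(1) less_le)
  then have "continuous (at 0 within {0..}) k"
    by (simp add: continuous_within damped_kernel_def)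
  ultimately show ?thesis
    by (auto simp: continuous_on_eq_continuous_within le_less)
qed

lemma kernel_has_real_derivative:
  assumes "0 < \<xi>" shows "(k has_real_derivative k' \<xi>) (at \<xi>)"
proof -
  have "\<xi> powr (\<alpha> - 1) * \<xi> powr \<beta> = \<xi> powr \<alpha> * \<xi> powr (\<beta> - 1)"
    by (simp add: powr_add[symmetric] algebra_simps)
  then show ?thesis
    unfolding damped_kernel_def[abs_def] damped_kernel_deriv_def using assms
    by (auto intro!: derivative_eq_intros simp: algebra_simps)
qed

lemma kernel_deriv_continuous_on: "continuous_on {0<..} k'"
  unfolding damped_kernel_deriv_def by (intro continuous_intros) auto

lemma abs_kernel_deriv_le:
  assumes "0 < \<xi>"
  shows "\<bar>k' \<xi>\<bar> \<le> c * (\<alpha> - \<beta>) * \<xi> powr (\<alpha> + \<beta> - 1)"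
    and "\<bar>k' \<xi>\<bar> \<le> (\<alpha> - \<beta>) * \<xi> powr (\<beta> - 1)"
proof -
  define u where "u = c * \<xi> powr \<alpha>"
  have "0 \<le> u" using c_pos by (simp add: u_def)
  have "\<alpha> > 0" using exponent_sum_pos decay_exponent by linarith
  have "\<bar>\<alpha> * u * exp (- u) + \<beta> * (1 - exp (- u))\<bar> \<le> \<alpha> * (u * exp (- u)) + (- \<beta>) * (1 - exp (- u))"
    using \<open>0 \<le> u\<close> \<open>\<alpha> > 0\<close> decay_exponent mult_nonpos_nonneg[of \<beta> "1 - exp (- u)"]
    by (auto simp: abs_le_iff mult.assoc)
  also have "\<dots> \<le> \<alpha> * min u 1 + (- \<beta>) * min u 1"
    using mult_exp_minus_le[OF \<open>0 \<le> u\<close>] one_minus_exp_minus_le[of u] \<open>\<alpha> > 0\<close> decay_exponent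
    by (intro add_mono mult_left_mono) auto
  finally have factor: "\<bar>\<alpha> * u * exp (- u) + \<beta> * (1 - exp (- u))\<bar> \<le> (\<alpha> - \<beta>) * min u 1"
    by (simp add: algebra_simps)
  have k'_eq: "k' \<xi> = (\<alpha> * u * exp (- u) + \<beta> * (1 - exp (- u))) * \<xi> powr (\<beta> - 1)"
    by (simp add: damped_kernel_deriv_def u_def)
  have bound: "\<bar>k' \<xi>\<bar> \<le> (\<alpha> - \<beta>) * m * \<xi> powr (\<beta> - 1)" if "min u 1 \<le> m" for m
  proof -
    have "\<bar>k' \<xi>\<bar> \<le> (\<alpha> - \<beta>) * min u 1 * \<xi> powr (\<beta> - 1)"
      unfolding k'_eq abs_mult abs_of_nonneg[OF powr_ge_zero] using factor by (rule mult_right_mono) simp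
    also have "\<dots> \<le> (\<alpha> - \<beta>) * m * \<xi> powr (\<beta> - 1)"
      using that \<open>\<alpha> > 0\<close> decay_exponent by (intro mult_right_mono mult_left_mono) auto
    finally show ?thesis .
  qed
  have "u * \<xi> powr (\<beta> - 1) = c * \<xi> powr (\<alpha> + \<beta> - 1)"
    by (simp add: u_def powr_add[symmetric] algebra_simps)
  then show "\<bar>k' \<xi>\<bar> \<le> c * (\<alpha> - \<beta>) * \<xi> powr (\<alpha> + \<beta> - 1)"
    using bound[of u] by (simp add: algebra_simps)
  show "\<bar>k' \<xi>\<bar> \<le> (\<alpha> - \<beta>) * \<xi> powr (\<beta> - 1)"
    using bound[of 1] by simp
qed

lemma integral_abs_kernel_deriv_le:
  assumes "0 < a" "a \<le> b"
  shows "integral {a..b} (\<lambda>\<xi>. \<bar>k' \<xi>\<bar>) \<le> c * (\<alpha> - \<beta>) / (\<alpha> + \<beta>) - (\<alpha> - \<beta>) / \<beta>"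
  using integral_abs_le_by_powr_majorants[OF kernel_deriv_continuous_on
      abs_kernel_deriv_le(1) abs_kernel_deriv_le(2) _ _ _ _ assms]
    c_pos exponent_sum_pos decay_exponent
  by simp

lemma kernel_cos_absolutely_integrable:
  "(\<lambda>\<xi>. k \<xi> * cos (\<xi> * r)) absolutely_integrable_on {0..}"
proof (rule absolutely_integrable_atLeast0_powr_majorant[OF _ _ decay_exponent])
  show "continuous_on {0..} (\<lambda>\<xi>. k \<xi> * cos (\<xi> * r))"
    by (intro continuous_intros kernel_continuous_on)
  show "\<bar>k \<xi> * cos (\<xi> * r)\<bar> \<le> 1 * \<xi> powr \<beta>" if "1 \<le> \<xi>" for \<xi>
  proof -
    have "\<bar>k \<xi> * cos (\<xi> * r)\<bar> \<le> \<bar>k \<xi>\<bar>"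
      by (rule abs_mult_cos_le)
    also have "\<dots> \<le> \<xi> powr \<beta>"
      using that kernel_le(2)[of \<xi>] kernel_nonneg[of \<xi>] by simp
    finally show ?thesis by simp
  qed
qed

lemma kernel_cos_improper_integrable: "improper_integrable0 (\<lambda>\<xi>. k \<xi> * cos (\<xi> * r))"
  by (rule improper_integral0_absolutely_integrable(1)[OF kernel_cos_absolutely_integrable])

lemma abs_kernel_cos_improper_integral_le:
  assumes "0 < r"
  shows "\<bar>improper_integral0 (\<lambda>\<xi>. k \<xi> * cos (\<xi> * r))\<bar> \<le>
    (2 * max c 1 + (c * (\<alpha> - \<beta>) / (\<alpha> + \<beta>) - (\<alpha> - \<beta>) / \<beta>)) / r"
  by (rule abs_improper_integral0_le[OF kernel_cos_absolutely_integrable abs_integral_cos_le[OF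
        kernel_continuous_on kernel_has_real_derivative kernel_deriv_continuous_on abs_kernel_le
        integral_abs_kernel_deriv_le assms]])

lemma kernel_cos_improper_integral_bigo:
  "(\<lambda>r. improper_integral0 (\<lambda>\<xi>. k \<xi> * cos (\<xi> * r))) \<in> O[at_top](\<lambda>r. r powr -1)"
proof (rule bigoI)
  define K where "K = 2 * max c 1 + (c * (\<alpha> - \<beta>) / (\<alpha> + \<beta>) - (\<alpha> - \<beta>) / \<beta>)"
  show "\<forall>\<^sub>F r in at_top. norm (improper_integral0 (\<lambda>\<xi>. k \<xi> * cos (\<xi> * r))) \<le> K * norm (r powr -1)"
    using eventually_gt_at_top[of 0]
  proof eventually_elim
    case (elim r)
    then show ?case
      using abs_kernel_cos_improper_integral_le[OF elim] by (simp add: K_def powr_minus divide_inverse)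
  qed
qed

end

theorem mainTheorem12:
  fixes \<alpha> H t :: real
  assumes "1 < \<alpha>" "\<alpha> < 2" "(2 - \<alpha>) / 2 < H" "H < 1/2" "t > 0"
  shows "(\<forall>r>0. improper_integrable0 (\<lambda>\<xi>. hfun \<alpha> H t \<xi> * cos (\<xi> * r)))
    \<and> (\<lambda>r. improper_integral0 (\<lambda>\<xi>. hfun \<alpha> H t \<xi> * cos (\<xi> * r)))
        \<in> O[at_top](\<lambda>r. r powr ((H - 1) / 2))"
proof -
  interpret damped_kernel_exponents "2 * t" \<alpha> "1 - 2 * H - \<alpha>"
    by unfold_locales (use assms in \<open>auto simp: field_simps\<close>)
  have hfun_eq: "hfun \<alpha> H t = damped_kernel (2 * t) \<alpha> (1 - 2 * H - \<alpha>)"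
    by (simp add: fun_eq_iff hfun_def damped_kernel_def)
  have "(\<lambda>r::real. r powr -1) \<in> O[at_top](\<lambda>r. r powr ((H - 1) / 2))"
    using assms by (subst powr_bigo_iff) (auto intro: filterlim_ident)
  then show ?thesis
    unfolding hfun_eq
    using kernel_cos_improper_integrable landau_o.big_trans[OF kernel_cos_improper_integral_bigo]
    by blast
qed

end
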